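(* Let $(f,t)$ be a tax-based mechanism (with $n\ge 2$ players), where each type set $\Theta_i$ is a compact subset of some $\mathbb{R}^k$ and each $t_i$ is continuous. Define $T(\theta):=\sum_{i=1}^n t_i(\theta)$, $S_i^{BCGC}(\theta_{-i}):=\max_{\theta_i'\in\Theta_i} T(\theta_i',\theta_{-i})$, and $t_i^{BCGC}(\theta):=t_i(\theta)-S_i^{BCGC}(\theta_{-i})/n$. Then: (i) the mechanism $(f,t^{BCGC})$ is feasible; (ii) if $(f,t)$ is feasible, then either $t^{BCGC}=t$ or $(f,t^{BCGC})$ dominates $(f,t)$.
   Context: Setting: a set of decisions $D$, players $1,\dots,n$ ($n\ge2$), type sets $\Theta_i$, $\Theta:=\Theta_1\times\cdots\times\Theta_n$, and initial utility functions $v_i:D\times\Theta_i\to\mathbb{R}$. A tax-based mechanism is a pair $(f,t)$ with $f:\Theta\to D$ and $t=(t_1,\dots,t_n):\Theta\to\mathbb{R}^n$; player $i$'s final utility when reports are $\theta'$ and true type is $\theta_i$ is $v_i(f(\theta'),\theta_i)+t_i(\theta')$ (so $t_i>0$ means $i$ receives money). The mechanism is feasible if $\sum_i t_i(\theta)\le 0$ for all $\theta\in\Theta$. For two mechanisms with the same decision function, $t'$ dominates $t$ if $t_i(\theta)\le t'_i(\theta)$ for all $\theta$ and all $i$, with strict inequality for some $\theta$ and some $i$. *)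

theory Defs
  imports "HOL-Analysis.Analysis"
begin

text \<open>A mechanism is a pair (f, t) with f the decision function and t i the tax of player i.\<close>

definition profiles :: "nat \<Rightarrow> (nat \<Rightarrow> 'a set) \<Rightarrow> (nat \<Rightarrow> 'a) set" where
  "profiles n Thetas = PiE {..<n} Thetas"

definition feasible ::
  "nat \<Rightarrow> (nat \<Rightarrow> 'a set) \<Rightarrow> ((nat \<Rightarrow> 'a) \<Rightarrow> 'd) \<times> (nat \<Rightarrow> (nat \<Rightarrow> 'a) \<Rightarrow> real) \<Rightarrow> bool" where
  "feasible n Thetas m = (\<forall>\<theta>\<in>profiles n Thetas. (\<Sum>i<n. snd m i \<theta>) \<le> 0)"

definition dominates ::
  "nat \<Rightarrow> (nat \<Rightarrow> 'a set) \<Rightarrow> ((nat \<Rightarrow> 'a) \<Rightarrow> 'd) \<times> (nat \<Rightarrow> (nat \<Rightarrow> 'a) \<Rightarrow> real)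
     \<Rightarrow> ((nat \<Rightarrow> 'a) \<Rightarrow> 'd) \<times> (nat \<Rightarrow> (nat \<Rightarrow> 'a) \<Rightarrow> real) \<Rightarrow> bool" where
  "dominates n Thetas m' m =
     (fst m' = fst m \<and>
      (\<forall>\<theta>\<in>profiles n Thetas. \<forall>i<n. snd m i \<theta> \<le> snd m' i \<theta>) \<and>
      (\<exists>\<theta>\<in>profiles n Thetas. \<exists>i<n. snd m i \<theta> < snd m' i \<theta>))"

definition total_tax :: "nat \<Rightarrow> (nat \<Rightarrow> (nat \<Rightarrow> 'a) \<Rightarrow> real) \<Rightarrow> (nat \<Rightarrow> 'a) \<Rightarrow> real" where
  "total_tax n t \<theta> = (\<Sum>i<n. t i \<theta>)"

text \<open>S_i(theta_{-i}) = max over theta_i' in Theta_i of T(theta_i', theta_{-i});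
  the maximum exists by compactness/continuity, so it is written as a supremum.\<close>
definition S_BCGC ::
  "nat \<Rightarrow> (nat \<Rightarrow> 'a set) \<Rightarrow> (nat \<Rightarrow> (nat \<Rightarrow> 'a) \<Rightarrow> real) \<Rightarrow> nat \<Rightarrow> (nat \<Rightarrow> 'a) \<Rightarrow> real" where
  "S_BCGC n Thetas t i \<theta> = (SUP x\<in>Thetas i. total_tax n t (\<theta>(i := x)))"

definition t_BCGC ::
  "nat \<Rightarrow> (nat \<Rightarrow> 'a set) \<Rightarrow> (nat \<Rightarrow> (nat \<Rightarrow> 'a) \<Rightarrow> real) \<Rightarrow> nat \<Rightarrow> (nat \<Rightarrow> 'a) \<Rightarrow> real" where
  "t_BCGC n Thetas t i \<theta> = t i \<theta> - S_BCGC n Thetas t i \<theta> / real n"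

end

theory Submission
  imports Defs
begin

(* Write T for the total tax and S_i for its maximum over player i's
   own report.  Evaluating the maximum at the true report gives T <= S_i on every
   profile, hence sum_i t_BCGC_i = T - (sum_i S_i)/n <= T - T = 0: this is
   feasibility (i).  The maximum is attained and finite because T, restricted to
   the line obtained by varying one coordinate of a profile, is continuous on the
   compact set Theta_i.  If (f,t) is feasible, every profile on such a line is
   again a profile, so S_i <= 0 and therefore t_i <= t_BCGC_i pointwise; a
   pointwise larger tax vector either coincides with t or dominates it (ii). *)

lemma continuous_on_fun_upd:
  "continuous_on S (\<lambda>x::'a::topological_space. (\<theta>::'i \<Rightarrow> 'a)(i := x))"
proof (rule continuous_on_coordinatewise_then_product)
  fix j show "continuous_on S (\<lambda>x. (\<theta>(i := x)) j)"
    by (cases "j = i") (auto intro: continuous_intros)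
qed

lemma profiles_fun_upd:
  assumes "\<theta> \<in> profiles n Thetas" "i < n" "x \<in> Thetas i"
  shows "\<theta>(i := x) \<in> profiles n Thetas"
  using assms unfolding profiles_def by (auto simp: PiE_iff extensional_def)

lemma bdd_above_total_tax_line:
  fixes Thetas :: "nat \<Rightarrow> 'a::topological_space set"
  assumes compact: "compact (Thetas i)"
    and cont: "\<forall>k<n. continuous_on (profiles n Thetas) (t k)"
    and \<theta>: "\<theta> \<in> profiles n Thetas" and i: "i < n"
  shows "bdd_above ((\<lambda>x. total_tax n t (\<theta>(i := x))) ` Thetas i)"
proof -
  have line: "(\<lambda>x. \<theta>(i := x)) ` Thetas i \<subseteq> profiles n Thetas"
    using profiles_fun_upd[OF \<theta> i] by auto
  have "continuous_on (Thetas i) (\<lambda>x. t k (\<theta>(i := x)))" if "k < n" for k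
    using continuous_on_compose2[OF cont[rule_format, OF that] continuous_on_fun_upd line] .
  then have "continuous_on (Thetas i) (\<lambda>x. total_tax n t (\<theta>(i := x)))"
    unfolding total_tax_def by (intro continuous_on_sum) auto
  then have "compact ((\<lambda>x. total_tax n t (\<theta>(i := x))) ` Thetas i)"
    using compact by (rule compact_continuous_image)
  then show ?thesis
    by (intro bounded_imp_bdd_above compact_imp_bounded)
qed

lemma total_tax_le_S_BCGC:
  fixes Thetas :: "nat \<Rightarrow> 'a::topological_space set"
  assumes "compact (Thetas i)" "\<forall>k<n. continuous_on (profiles n Thetas) (t k)"
    and \<theta>: "\<theta> \<in> profiles n Thetas" and i: "i < n"
  shows "total_tax n t \<theta> \<le> S_BCGC n Thetas t i \<theta>"
proof -
  have "\<theta> i \<in> Thetas i" using \<theta> i unfolding profiles_def by auto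
  then have "total_tax n t (\<theta>(i := \<theta> i)) \<le> S_BCGC n Thetas t i \<theta>"
    unfolding S_BCGC_def
    by (intro cSUP_upper bdd_above_total_tax_line[OF assms])
  then show ?thesis by simp
qed

lemma feasible_t_BCGC:
  fixes Thetas :: "nat \<Rightarrow> 'a::topological_space set"
  assumes n: "n > 0"
    and compact: "\<forall>i<n. compact (Thetas i)"
    and cont: "\<forall>i<n. continuous_on (profiles n Thetas) (t i)"
  shows "feasible n Thetas (f, t_BCGC n Thetas t)"
  unfolding feasible_def snd_conv
proof
  fix \<theta> assume \<theta>: "\<theta> \<in> profiles n Thetas"
  have "(\<Sum>i<n. total_tax n t \<theta>) \<le> (\<Sum>i<n. S_BCGC n Thetas t i \<theta>)"
    using total_tax_le_S_BCGC[OF _ cont \<theta>] compact by (intro sum_mono) auto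
  then have "total_tax n t \<theta> \<le> (\<Sum>i<n. S_BCGC n Thetas t i \<theta>) / real n"
    using n by (simp add: field_simps)
  moreover have "(\<Sum>i<n. t_BCGC n Thetas t i \<theta>)
      = total_tax n t \<theta> - (\<Sum>i<n. S_BCGC n Thetas t i \<theta>) / real n"
    unfolding t_BCGC_def total_tax_def by (simp add: sum_subtractf sum_divide_distrib)
  ultimately show "(\<Sum>i<n. t_BCGC n Thetas t i \<theta>) \<le> 0" by simp
qed

text \<open>For a feasible mechanism S_i <= 0, since every point of the line varying
  player i's report is a profile; hence the BCGC taxes are pointwise at least t.
  No topological hypotheses are needed here.\<close>
lemma t_le_t_BCGC_if_feasible:
  assumes feasible: "feasible n Thetas (f, t)"
    and \<theta>: "\<theta> \<in> profiles n Thetas" and i: "i < n"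
  shows "t i \<theta> \<le> t_BCGC n Thetas t i \<theta>"
proof -
  have "Thetas i \<noteq> {}" using \<theta> i unfolding profiles_def by auto
  then have "S_BCGC n Thetas t i \<theta> \<le> 0"
    unfolding S_BCGC_def
  proof (rule cSUP_least)
    fix x assume "x \<in> Thetas i"
    then have "\<theta>(i := x) \<in> profiles n Thetas" by (rule profiles_fun_upd[OF \<theta> i])
    then show "total_tax n t (\<theta>(i := x)) \<le> 0"
      using feasible unfolding feasible_def total_tax_def by auto
  qed
  then show ?thesis
    unfolding t_BCGC_def by (simp add: divide_nonpos_nonneg)
qed

lemma eq_or_dominates_if_pointwise_ge:
  assumes ge: "\<forall>\<theta>\<in>profiles n Thetas. \<forall>i<n. t i \<theta> \<le> t' i \<theta>"
  shows "(\<forall>\<theta>\<in>profiles n Thetas. \<forall>i<n. t' i \<theta> = t i \<theta>) \<or> dominates n Thetas (f, t') (f, t)"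
proof (cases "\<forall>\<theta>\<in>profiles n Thetas. \<forall>i<n. t' i \<theta> = t i \<theta>")
  case False
  then obtain \<theta> i where "\<theta> \<in> profiles n Thetas" "i < n" "t i \<theta> < t' i \<theta>"
    using ge by (force simp: order.order_iff_strict)
  then show ?thesis
    using ge unfolding dominates_def by auto
qed simp

theorem mainTheorem1:
  fixes n :: nat
    and Thetas :: "nat \<Rightarrow> 'a::euclidean_space set"
    and f :: "(nat \<Rightarrow> 'a) \<Rightarrow> 'd"
    and t :: "nat \<Rightarrow> (nat \<Rightarrow> 'a) \<Rightarrow> real"
  assumes "n \<ge> 2"
    and "\<forall>i<n. compact (Thetas i)"
    and "\<forall>i<n. continuous_on (profiles n Thetas) (t i)"
  shows "feasible n Thetas (f, t_BCGC n Thetas t) \<and>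
         (feasible n Thetas (f, t) \<longrightarrow>
           (\<forall>\<theta>\<in>profiles n Thetas. \<forall>i<n. t_BCGC n Thetas t i \<theta> = t i \<theta>)
           \<or> dominates n Thetas (f, t_BCGC n Thetas t) (f, t))"
proof (intro conjI impI)
  show "feasible n Thetas (f, t_BCGC n Thetas t)"
    using assms by (intro feasible_t_BCGC) auto
next
  assume "feasible n Thetas (f, t)"
  then have "\<forall>\<theta>\<in>profiles n Thetas. \<forall>i<n. t i \<theta> \<le> t_BCGC n Thetas t i \<theta>"
    using t_le_t_BCGC_if_feasible by blast
  then show "(\<forall>\<theta>\<in>profiles n Thetas. \<forall>i<n. t_BCGC n Thetas t i \<theta> = t i \<theta>)
      \<or> dominates n Thetas (f, t_BCGC n Thetas t) (f, t)"
    by (rule eq_or_dominates_if_pointwise_ge)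
qed

end
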